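(* Let $Q$ be a Dynkin quiver equipped with a group $G$ of automorphisms, and let $\gamma,\beta\in\Phi(Q)$ be roots such that $\pi(\gamma)=\pi(\beta)$. Then there exists $g\in G$ such that $\gamma=g\cdot\beta$.
   Context: A Dynkin quiver is a finite quiver whose underlying graph is a Dynkin diagram of type $\mathbb A_n,\mathbb D_n,\mathbb E_6,\mathbb E_7,\mathbb E_8$, with vertex set $Q_0$. $\Phi(Q)\subset\mathbb Z^{Q_0}$ is its root system, roots written in the basis of simple roots $\alpha_i$, $i\in Q_0$. An automorphism of $Q$ is a permutation $g$ of $Q_0$ preserving $b_{ij}$ = #arrows $i\to j$ $-$ #arrows $j\to i$. $G$ acts on $\mathbb Z^{Q_0}$ by $g\cdot(d_i)_{i}=(d_{g^{-1}i})_i$. With $\overline Q_0$ the set of $G$-orbits, $\pi:\mathbb Z^{Q_0}\to\mathbb Z^{\overline Q_0}$ is $(d_i)_i\mapsto(\sum_{j\in\mathbf i}d_j)_{\mathbf i\in\overline Q_0}$. *)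

theory Defs
  imports Main
begin

text \<open>A quiver on the finite vertex type 'v is given by its arrow counts:
  a i j = number of arrows i -> j.\<close>

definition bmat :: "('v \<Rightarrow> 'v \<Rightarrow> nat) \<Rightarrow> 'v \<Rightarrow> 'v \<Rightarrow> int" where
  "bmat a i j = int (a i j) - int (a j i)"

text \<open>Standard Dynkin diagrams on vertex set {0..<n} (simply laced, as undirected graphs).\<close>

definition path_edge :: "nat \<Rightarrow> nat \<Rightarrow> bool" where
  "path_edge i j \<longleftrightarrow> i = Suc j \<or> j = Suc i"

definition typeA :: "nat \<Rightarrow> nat \<Rightarrow> nat \<Rightarrow> bool" where
  "typeA n i j \<longleftrightarrow> i < n \<and> j < n \<and> path_edge i j"

definition branched :: "nat \<Rightarrow> nat \<Rightarrow> nat \<Rightarrow> nat \<Rightarrow> bool" where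
  "branched n k i j \<longleftrightarrow>
     (i < n - 1 \<and> j < n - 1 \<and> path_edge i j) \<or>
     (i = n - 1 \<and> j = k) \<or> (i = k \<and> j = n - 1)"

definition dynkin_graph :: "nat \<Rightarrow> (nat \<Rightarrow> nat \<Rightarrow> bool) \<Rightarrow> bool" where
  "dynkin_graph n E \<longleftrightarrow>
     (n \<ge> 1 \<and> E = typeA n) \<or>
     (n \<ge> 4 \<and> E = branched n (n - 3)) \<or>
     (n \<in> {6, 7, 8} \<and> E = branched n 2)"

text \<open>A Dynkin quiver: its underlying graph (edge multiplicity between i and j is
  a i j + a j i) is isomorphic to a Dynkin diagram of type A_n, D_n, E_6, E_7, E_8.\<close>
definition dynkin_quiver :: "('v::finite \<Rightarrow> 'v \<Rightarrow> nat) \<Rightarrow> bool" where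
  "dynkin_quiver a \<longleftrightarrow> (\<exists>n E f. dynkin_graph n E \<and> bij_betw f UNIV {0..<n} \<and>
      (\<forall>i j. a i j + a j i = (if E (f i) (f j) then 1 else 0)))"

definition cartan :: "('v \<Rightarrow> 'v \<Rightarrow> nat) \<Rightarrow> 'v \<Rightarrow> 'v \<Rightarrow> int" where
  "cartan a i j = (if i = j then 2 else 0) - int (a i j + a j i)"

definition simple_root :: "'v \<Rightarrow> 'v \<Rightarrow> int" where
  "simple_root i = (\<lambda>j. if j = i then 1 else 0)"

definition reflection :: "('v::finite \<Rightarrow> 'v \<Rightarrow> nat) \<Rightarrow> 'v \<Rightarrow> ('v \<Rightarrow> int) \<Rightarrow> ('v \<Rightarrow> int)" where
  "reflection a i d = (\<lambda>j. d j - (\<Sum>k\<in>UNIV. cartan a k i * d k) * simple_root i j)"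

inductive_set roots :: "('v::finite \<Rightarrow> 'v \<Rightarrow> nat) \<Rightarrow> ('v \<Rightarrow> int) set" for a where
  simple: "simple_root i \<in> roots a"
| refl: "d \<in> roots a \<Longrightarrow> reflection a i d \<in> roots a"

definition quiver_aut :: "('v \<Rightarrow> 'v \<Rightarrow> nat) \<Rightarrow> ('v \<Rightarrow> 'v) \<Rightarrow> bool" where
  "quiver_aut a g \<longleftrightarrow> bij g \<and> (\<forall>i j. bmat a (g i) (g j) = bmat a i j)"

definition aut_group :: "('v \<Rightarrow> 'v \<Rightarrow> nat) \<Rightarrow> ('v \<Rightarrow> 'v) set \<Rightarrow> bool" where
  "aut_group a G \<longleftrightarrow> (\<forall>g\<in>G. quiver_aut a g) \<and> id \<in> G \<and>
     (\<forall>g\<in>G. \<forall>h\<in>G. g \<circ> h \<in> G) \<and> (\<forall>g\<in>G. inv g \<in> G)"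

definition act :: "('v \<Rightarrow> 'v) \<Rightarrow> ('v \<Rightarrow> int) \<Rightarrow> ('v \<Rightarrow> int)" where
  "act g d = (\<lambda>i. d (inv g i))"

definition orbit :: "('v \<Rightarrow> 'v) set \<Rightarrow> 'v \<Rightarrow> 'v set" where
  "orbit G i = (\<lambda>g. g i) ` G"

text \<open>pi(d): the component at an orbit X is the sum of d over X.\<close>
definition orbit_proj :: "('v \<Rightarrow> int) \<Rightarrow> 'v set \<Rightarrow> int" where
  "orbit_proj d X = (\<Sum>j\<in>X. d j)"

end

theory Submission
  imports Defs
begin

text \<open>
  The symmetric form (x, y) = x^T C y given by the Cartan matrix of a Dynkin quiver is positive
  definite and even, so roots have norm 2 and are either nonnegative or nonpositive. Positive
  definiteness also forces the vertices of one G-orbit to be pairwise non-adjacent: hence for each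
  orbit O the simple reflections s_k, k \<in> O, commute, their product s_O is an involution of the
  root system commuting with G, and \<pi>(s_O d) is determined by \<pi>(d). For a positive root \<gamma> that is
  not supported in a single orbit, averaging \<gamma> over G yields an orbit O with
  (\<gamma>, \<Sum>k\<in>O. \<alpha>_k) > 0, and applying s_O to both \<gamma> and \<beta> lowers their common height.
  Induction on the height ends with simple roots from one orbit, which are G-conjugate.
\<close>

section \<open>Positive definiteness of the Dynkin quadratic forms\<close>

definition graph_form :: "nat \<Rightarrow> (nat \<Rightarrow> nat \<Rightarrow> bool) \<Rightarrow> (nat \<Rightarrow> int) \<Rightarrow> int" where
  "graph_form n E x =
     2 * (\<Sum>m<n. x m * x m) - (\<Sum>m<n. \<Sum>m'<n. if E m m' then x m * x m' else 0)"

definition path_pairing :: "nat \<Rightarrow> (nat \<Rightarrow> int) \<Rightarrow> int" where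
  "path_pairing n x = (\<Sum>m<n. \<Sum>m'<n. if path_edge m m' then x m * x m' else 0)"

lemma path_pairing_0 [simp]: "path_pairing 0 x = 0"
  by (simp add: path_pairing_def)

lemma path_pairing_Suc:
  "path_pairing (Suc n) x = path_pairing n x + (if n = 0 then 0 else 2 * x (n - 1) * x n)"
proof -
  have last: "(\<Sum>m<n. if path_edge m n then x m * x n else 0)
      = (if n = 0 then 0 else x (n - 1) * x n)"
  proof (cases n)
    case (Suc k)
    have "(\<Sum>m<n. if path_edge m n then x m * x n else 0) = (\<Sum>m<n. if m = k then x m * x n else 0)"
      by (rule sum.cong) (auto simp: path_edge_def Suc)
    then show ?thesis using Suc by simp
  qed simp
  have "(\<Sum>m<n. if path_edge n m then x n * x m else 0)
      = (\<Sum>m<n. if path_edge m n then x m * x n else 0)"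
    by (rule sum.cong) (auto simp: path_edge_def mult.commute)
  moreover have "path_pairing (Suc n) x = path_pairing n x
      + (\<Sum>m<n. if path_edge m n then x m * x n else 0)
      + (\<Sum>m<n. if path_edge n m then x n * x m else 0)"
    by (simp add: path_pairing_def sum.distrib path_edge_def)
  ultimately show ?thesis using last by simp
qed

definition chain_squares :: "nat \<Rightarrow> (nat \<Rightarrow> int) \<Rightarrow> int" where
  "chain_squares k x = (x 0)\<^sup>2 + (\<Sum>m<k. (x m - x (Suc m))\<^sup>2)"

lemma path_form_eq_chain_squares:
  "2 * (\<Sum>m<Suc k. x m * x m) - path_pairing (Suc k) x = chain_squares k x + (x k)\<^sup>2"
proof (induction k)
  case 0
  show ?case by (simp add: path_pairing_Suc chain_squares_def power2_eq_square)
next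
  case (Suc k)
  then show ?case
    by (simp add: path_pairing_Suc chain_squares_def power2_eq_square algebra_simps)
qed

lemma chain_squares_nonneg: "chain_squares k x \<ge> 0"
  unfolding chain_squares_def by (intro add_nonneg_nonneg sum_nonneg) auto

lemma chain_squares_eq_0: "chain_squares k x = 0 \<Longrightarrow> m \<le> k \<Longrightarrow> x m = 0"
proof (induction k arbitrary: m)
  case (Suc k)
  have "chain_squares (Suc k) x = chain_squares k x + (x k - x (Suc k))\<^sup>2"
    by (simp add: chain_squares_def)
  then have "chain_squares k x = 0" and "(x k - x (Suc k))\<^sup>2 = 0"
    using Suc.prems chain_squares_nonneg[of k x] by (smt (verit) zero_le_power2)+
  then show ?case using Suc by (cases "m = Suc k") auto
qed (simp add: chain_squares_def)

lemma graph_form_typeA: "graph_form (Suc k) (typeA (Suc k)) x = chain_squares k x + (x k)\<^sup>2"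
proof -
  have "graph_form (Suc k) (typeA (Suc k)) x = 2 * (\<Sum>m<Suc k. x m * x m) - path_pairing (Suc k) x"
    unfolding graph_form_def path_pairing_def typeA_def
    by (intro arg_cong2[where f="(-)"] HOL.refl sum.cong) auto
  then show ?thesis using path_form_eq_chain_squares by simp
qed

lemma graph_form_branched:
  assumes "k < p"
  shows "graph_form (Suc p) (branched (Suc p) k) x =
           2 * (\<Sum>m<Suc p. x m * x m) - path_pairing p x - 2 * x k * x p"
proof -
  have "(\<Sum>m<p. \<Sum>m'<p. if branched (Suc p) k m m' then x m * x m' else 0) = path_pairing p x"
    unfolding path_pairing_def branched_def by (intro sum.cong HOL.refl) auto
  moreover have "(\<Sum>m<p. if branched (Suc p) k m p then x m * x p else 0) = x k * x p"
    and "(\<Sum>m<p. if branched (Suc p) k p m then x p * x m else 0) = x k * x p"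
    using assms
    by (simp_all add: branched_def if_distrib[of "\<lambda>P. P \<or> _"] mult.commute cong: if_cong)
  moreover have "\<not> branched (Suc p) k p p"
    using assms by (auto simp: branched_def path_edge_def)
  ultimately show ?thesis
    unfolding graph_form_def by (simp add: sum.distrib)
qed

lemma graph_form_typeD:
  "graph_form (k + 4) (branched (k + 4) (k + 1)) x =
     chain_squares (k + 1) x + (x (k + 2) + x (k + 3) - x (k + 1))\<^sup>2 + (x (k + 2) - x (k + 3))\<^sup>2"
proof -
  have "graph_form (k + 4) (branched (k + 4) (k + 1)) x =
      2 * (\<Sum>m<k + 4. x m * x m) - path_pairing (k + 3) x - 2 * x (k + 1) * x (k + 3)"
    using graph_form_branched[of "k + 1" "k + 3" x] by (simp add: numeral_eq_Suc)
  also have "\<dots> = (2 * (\<Sum>m<Suc (Suc k). x m * x m) - path_pairing (Suc (Suc k)) x)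
      + 2 * (x (k + 2))\<^sup>2 + 2 * (x (k + 3))\<^sup>2
      - 2 * x (k + 1) * x (k + 2) - 2 * x (k + 1) * x (k + 3)"
    by (simp add: numeral_eq_Suc path_pairing_Suc power2_eq_square algebra_simps)
  finally show ?thesis
    by (simp only: path_form_eq_chain_squares) (simp add: power2_eq_square algebra_simps)
qed

lemma graph_form_E8:
  "60 * graph_form 8 (branched 8 2) x =
     30 * (2 * x 0 - x 1)\<^sup>2 + 10 * (3 * x 1 - 2 * x 2)\<^sup>2 + 30 * (2 * x 7 - x 2)\<^sup>2
     + 30 * (2 * x 6 - x 5)\<^sup>2 + 10 * (3 * x 5 - 2 * x 4)\<^sup>2 + 5 * (4 * x 4 - 3 * x 3)\<^sup>2
     + 3 * (5 * x 3 - 4 * x 2)\<^sup>2 + 2 * (x 2)\<^sup>2"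
  using graph_form_branched[of 2 7 x]
  by (simp add: numeral_eq_Suc path_pairing_Suc power2_eq_square algebra_simps)

lemma graph_form_E8_pos:
  assumes "m < 8" and "x m \<noteq> 0"
  shows "graph_form 8 (branched 8 2) x > 0"
proof (rule ccontr)
  assume "\<not> ?thesis"
  then have "60 * graph_form 8 (branched 8 2) x \<le> 0" by simp
  then have "(2 * x 0 - x 1)\<^sup>2 = 0" "(3 * x 1 - 2 * x 2)\<^sup>2 = 0" "(2 * x 7 - x 2)\<^sup>2 = 0"
    "(2 * x 6 - x 5)\<^sup>2 = 0" "(3 * x 5 - 2 * x 4)\<^sup>2 = 0" "(4 * x 4 - 3 * x 3)\<^sup>2 = 0"
    "(5 * x 3 - 4 * x 2)\<^sup>2 = 0" "(x 2)\<^sup>2 = 0"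
    unfolding graph_form_E8 by (smt (verit) zero_le_power2)+
  then have "x 0 = 0" "x 1 = 0" "x 2 = 0" "x 3 = 0" "x 4 = 0" "x 5 = 0" "x 6 = 0" "x 7 = 0"
    by auto
  moreover have "m = 0 \<or> m = 1 \<or> m = 2 \<or> m = 3 \<or> m = 4 \<or> m = 5 \<or> m = 6 \<or> m = 7"
    using assms(1) by arith
  ultimately show False using assms(2) by auto
qed

text \<open>E6 and E7 are full subgraphs of E8: keep the path and move the branch vertex n - 1 to 7.\<close>
lemma graph_form_E_restrict:
  assumes "n \<in> {6, 7, 8}"
  shows "graph_form n (branched n 2) x =
           graph_form 8 (branched 8 2)
             (\<lambda>m. if m < n - 1 then x m else if m = 7 then x (n - 1) else 0)"
    (is "_ = graph_form 8 _ ?y")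
proof -
  have "graph_form n (branched n 2) x =
      2 * (\<Sum>m<n. x m * x m) - path_pairing (n - 1) x - 2 * x 2 * x (n - 1)"
    using assms graph_form_branched[of 2 "n - 1" x] by auto
  moreover have "graph_form 8 (branched 8 2) ?y =
      2 * (\<Sum>m<8. ?y m * ?y m) - path_pairing 7 ?y - 2 * ?y 2 * ?y 7"
    using graph_form_branched[of 2 7 ?y] by simp
  ultimately show ?thesis
    using assms by (elim insertE emptyE) (simp_all add: numeral_eq_Suc path_pairing_Suc)
qed

lemma graph_form_E_pos:
  assumes "n \<in> {6, 7, 8}" and "m < n" and "x m \<noteq> 0"
  shows "graph_form n (branched n 2) x > 0"
proof -
  define y where "y m = (if m < n - 1 then x m else if m = 7 then x (n - 1) else 0)" for m
  obtain m' where "m' < 8" and "y m' \<noteq> 0"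
  proof (cases "m < n - 1")
    case True
    then show ?thesis using that[of m] assms by (auto simp: y_def)
  next
    case False
    then have "m = n - 1" using assms(2) by simp
    then show ?thesis using that[of 7] assms by (auto simp: y_def)
  qed
  then have "graph_form 8 (branched 8 2) y > 0"
    by (rule graph_form_E8_pos)
  then show ?thesis
    using graph_form_E_restrict[OF assms(1)] unfolding y_def[abs_def] by simp
qed

lemma dynkin_graph_form_pos:
  assumes "dynkin_graph n E" and "m < n" and "x m \<noteq> 0"
  shows "graph_form n E x > 0"
  using assms(1) unfolding dynkin_graph_def
proof (elim disjE conjE)
  assume "1 \<le> n" "E = typeA n"
  then obtain k where n: "n = Suc k" by (cases n) auto
  show ?thesis
  proof (rule ccontr)
    assume "\<not> ?thesis"
    then have "chain_squares k x = 0"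
      using graph_form_typeA[of k x] chain_squares_nonneg[of k x] \<open>E = typeA n\<close> n
      by (smt (verit) zero_le_power2)
    then show False using chain_squares_eq_0 assms n by simp
  qed
next
  assume "4 \<le> n" "E = branched n (n - 3)"
  then obtain k where n: "n = k + 4" using le_Suc_ex[of 4 n] by (auto simp: add.commute)
  have form: "graph_form n E x = chain_squares (k + 1) x
      + (x (k + 2) + x (k + 3) - x (k + 1))\<^sup>2 + (x (k + 2) - x (k + 3))\<^sup>2"
    using graph_form_typeD[of k x] \<open>E = _\<close> n by simp
  show ?thesis
  proof (rule ccontr)
    assume "\<not> ?thesis"
    then have "chain_squares (k + 1) x = 0" "(x (k + 2) + x (k + 3) - x (k + 1))\<^sup>2 = 0"
      "(x (k + 2) - x (k + 3))\<^sup>2 = 0"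
      using form chain_squares_nonneg[of "k + 1" x] by (smt (verit) zero_le_power2)+
    then have "\<forall>i\<le>k + 1. x i = 0" "x (k + 2) = 0" "x (k + 3) = 0"
      using chain_squares_eq_0[of "k + 1" x] by auto
    moreover have "m \<le> k + 1 \<or> m = k + 2 \<or> m = k + 3"
      using assms(2) n by linarith
    ultimately show False using assms(3) by auto
  qed
next
  assume "n \<in> {6, 7, 8}" "E = branched n 2"
  then show ?thesis using graph_form_E_pos assms by simp
qed

section \<open>The symmetric bilinear form and the roots\<close>

definition cartan_form :: "('v::finite \<Rightarrow> 'v \<Rightarrow> nat) \<Rightarrow> ('v \<Rightarrow> int) \<Rightarrow> ('v \<Rightarrow> int) \<Rightarrow> int" where
  "cartan_form a x y = (\<Sum>i\<in>UNIV. \<Sum>j\<in>UNIV. cartan a i j * x i * y j)"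

lemma cartan_sym: "cartan a i j = cartan a j i"
  by (simp add: cartan_def add.commute)

lemma cartan_form_sym: "cartan_form a x y = cartan_form a y x"
  unfolding cartan_form_def by (subst sum.swap) (simp add: cartan_sym mult_ac)

lemma cartan_form_simple_root: "cartan_form a x (simple_root j) = (\<Sum>i\<in>UNIV. cartan a i j * x i)"
  unfolding cartan_form_def simple_root_def by (simp add: if_distrib cong: if_cong)

lemma cartan_form_expand_right:
  "cartan_form a x y = (\<Sum>j\<in>UNIV. y j * cartan_form a x (simple_root j))"
  unfolding cartan_form_simple_root unfolding cartan_form_def
  by (subst sum.swap) (simp add: sum_distrib_left mult_ac)

lemma cartan_form_simple_simple: "cartan_form a (simple_root i) (simple_root j) = cartan a i j"
  unfolding cartan_form_simple_root by (simp add: simple_root_def if_distrib cong: if_cong)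

lemma cartan_form_linear_left:
  "cartan_form a (\<lambda>i. u * x i + v * y i) z = u * cartan_form a x z + v * cartan_form a y z"
  unfolding cartan_form_def by (simp add: sum_distrib_left sum.distrib algebra_simps)

lemma cartan_form_linear_right:
  "cartan_form a z (\<lambda>i. u * x i + v * y i) = u * cartan_form a z x + v * cartan_form a z y"
  by (simp add: cartan_form_sym[of a z] cartan_form_linear_left)

lemma cartan_form_uminus_left: "cartan_form a (- x) z = - cartan_form a x z"
  unfolding cartan_form_def by (simp add: sum_negf)

lemma cartan_form_sum_left:
  "finite A \<Longrightarrow> cartan_form a (\<lambda>i. \<Sum>g\<in>A. f g i) z = (\<Sum>g\<in>A. cartan_form a (f g) z)"
  unfolding cartan_form_def by (simp add: sum_distrib_right sum_distrib_left)
    (subst sum.swap, rule sum.cong, simp, subst sum.swap, simp)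

lemma reflection_eq:
  "reflection a j d = (\<lambda>k. d k - cartan_form a d (simple_root j) * simple_root j k)"
  unfolding reflection_def cartan_form_simple_root by (simp add: mult_ac)

lemma cartan_form_reflection:
  assumes "cartan a j j = 2"
  shows "cartan_form a (reflection a j x) (reflection a j y) = cartan_form a x y"
proof -
  let ?e = "simple_root j"
  have rx: "reflection a j x = (\<lambda>k. 1 * x k + (- cartan_form a x ?e) * ?e k)"
    and ry: "reflection a j y = (\<lambda>k. 1 * y k + (- cartan_form a y ?e) * ?e k)"
    by (simp_all add: reflection_eq)
  have ee: "cartan_form a ?e ?e = 2"
    using assms by (simp add: cartan_form_simple_simple)
  show ?thesis
    unfolding rx ry cartan_form_linear_left cartan_form_linear_right ee
    by (simp add: cartan_form_sym[of a ?e] algebra_simps)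
qed

lemma cartan_form_eq_graph_form:
  assumes f: "bij_betw f UNIV {0..<n}"
    and arrows: "\<forall>i j. a i j + a j i = (if E (f i) (f j) then 1 else 0)"
  shows "cartan_form a d d = graph_form n E (d \<circ> inv_into UNIV f)"
proof -
  define x where "x = d \<circ> inv_into UNIV f"
  have xf: "x (f i) = d i" for i
    using f unfolding x_def bij_betw_def by simp
  have reindex: "(\<Sum>i\<in>UNIV. h (f i)) = (\<Sum>m<n. h m)" for h :: "nat \<Rightarrow> int"
    using sum.reindex_bij_betw[OF f, of h] by (simp add: atLeast0LessThan)
  have "cartan_form a d d = (\<Sum>i\<in>UNIV. \<Sum>j\<in>UNIV.
      (if i = j then 2 * d i * d j else 0) - (if E (f i) (f j) then d i * d j else 0))"
    unfolding cartan_form_def cartan_def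
    by (auto intro!: sum.cong simp del: of_nat_add simp add: arrows algebra_simps)
  also have "\<dots> = 2 * (\<Sum>i\<in>UNIV. d i * d i)
      - (\<Sum>i\<in>UNIV. \<Sum>j\<in>UNIV. if E (f i) (f j) then d i * d j else 0)"
    by (simp add: sum_subtractf sum_distrib_left mult.assoc)
  also have "\<dots> = graph_form n E x"
    unfolding graph_form_def reindex[symmetric] xf ..
  finally show ?thesis unfolding x_def .
qed

definition nonneg :: "('v \<Rightarrow> int) \<Rightarrow> bool" where
  "nonneg d \<longleftrightarrow> (\<forall>i. d i \<ge> 0)"

definition height :: "('v::finite \<Rightarrow> int) \<Rightarrow> int" where
  "height d = (\<Sum>i\<in>UNIV. d i)"

lemma height_uminus: "height (- d) = - height d"
  by (simp add: height_def sum_negf)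

lemma height_nonneg: "nonneg d \<Longrightarrow> height d \<ge> 0"
  by (simp add: height_def nonneg_def sum_nonneg)

lemma height_pos:
  assumes "nonneg d" and "d \<noteq> (\<lambda>_. 0)"
  shows "height d > 0"
proof -
  obtain i where "d i \<noteq> 0" using assms(2) by auto
  then have "0 < d i" using assms(1) by (simp add: nonneg_def order_less_le)
  also have "d i \<le> height d"
    unfolding height_def using assms(1) by (intro member_le_sum) (auto simp: nonneg_def)
  finally show ?thesis .
qed

locale dynkin =
  fixes a :: "'v::finite \<Rightarrow> 'v \<Rightarrow> nat"
  assumes dynkin: "dynkin_quiver a"
begin

lemma arrows_le_1: "a i j + a j i \<le> 1"
  using dynkin unfolding dynkin_quiver_def by (metis (full_types) le_refl zero_le_one)

lemma cartan_diag: "cartan a i i = 2"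
  using arrows_le_1[of i i] by (simp add: cartan_def)

lemma cartan_form_pos:
  assumes "d \<noteq> (\<lambda>_. 0)"
  shows "cartan_form a d d > 0"
proof -
  obtain n E f where E: "dynkin_graph n E" and f: "bij_betw f UNIV {0..<n}"
    and arrows: "\<forall>i j. a i j + a j i = (if E (f i) (f j) then 1 else 0)"
    using dynkin unfolding dynkin_quiver_def by blast
  obtain i where "d i \<noteq> 0" using assms by auto
  moreover have "f i < n" and "inv_into UNIV f (f i) = i"
    using f by (auto simp: bij_betw_def)
  ultimately have "graph_form n E (d \<circ> inv_into UNIV f) > 0"
    using dynkin_graph_form_pos[OF E] by simp
  then show ?thesis
    using cartan_form_eq_graph_form[OF f arrows] by simp
qed

lemma cartan_form_diag:
  "cartan_form a x x = 2 * ((\<Sum>i\<in>UNIV. x i * x i) - (\<Sum>i\<in>UNIV. \<Sum>j\<in>UNIV. int (a i j) * x i * x j))"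
proof -
  have "cartan_form a x x = (\<Sum>i\<in>UNIV. \<Sum>j\<in>UNIV.
      (if i = j then 2 * x i * x j else 0) - int (a i j) * x i * x j - int (a j i) * x i * x j)"
    unfolding cartan_form_def cartan_def by (auto intro!: sum.cong simp: algebra_simps)
  also have "\<dots> = 2 * (\<Sum>i\<in>UNIV. x i * x i) - (\<Sum>i\<in>UNIV. \<Sum>j\<in>UNIV. int (a i j) * x i * x j)
      - (\<Sum>i\<in>UNIV. \<Sum>j\<in>UNIV. int (a j i) * x i * x j)"
    by (simp add: sum_subtractf sum_distrib_left mult.assoc)
  also have "(\<Sum>i\<in>UNIV. \<Sum>j\<in>UNIV. int (a j i) * x i * x j)
      = (\<Sum>i\<in>UNIV. \<Sum>j\<in>UNIV. int (a i j) * x i * x j)"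
    by (subst sum.swap) (simp add: mult_ac)
  finally show ?thesis by simp
qed

lemma cartan_form_ge_2:
  assumes "d \<noteq> (\<lambda>_. 0)"
  shows "cartan_form a d d \<ge> 2"
  using cartan_form_pos[OF assms] cartan_form_diag[of d] by presburger

lemma root_norm: "d \<in> roots a \<Longrightarrow> cartan_form a d d = 2"
  by (induction rule: roots.induct)
    (simp_all add: cartan_form_simple_simple cartan_form_reflection cartan_diag)

lemma root_nonzero: "d \<in> roots a \<Longrightarrow> d \<noteq> (\<lambda>_. 0)"
  using root_norm[of d] by (auto simp: cartan_form_def)

lemma root_uminus: "d \<in> roots a \<Longrightarrow> - d \<in> roots a"
proof (induction rule: roots.induct)
  case (simple i)
  have "reflection a i (simple_root i) = - simple_root i"
    by (simp add: reflection_eq cartan_form_simple_simple cartan_diag fun_eq_iff)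
  then show ?case using roots.simple roots.refl by metis
next
  case (refl d i)
  have "reflection a i (- d) = - reflection a i d"
    by (simp add: reflection_eq cartan_form_uminus_left fun_eq_iff)
  then show ?case using refl roots.refl by metis
qed

text \<open>Split d = p - m into positive and negative parts: (p, m) \<le> 0 because p and m have disjoint
  supports, so (d, d) \<ge> (p, p) + (m, m) \<ge> 4 if both parts are nonzero.\<close>
lemma root_sign:
  assumes "d \<in> roots a"
  shows "nonneg d \<or> nonneg (- d)"
proof (rule ccontr)
  assume "\<not> ?thesis"
  then obtain i j where i: "d i < 0" and j: "d j > 0" unfolding nonneg_def by (auto simp: not_le)
  define p where "p k = max (d k) 0" for k
  define m where "m k = max (- d k) 0" for k
  have d: "d = (\<lambda>k. 1 * p k + (-1) * m k)" by (auto simp: p_def m_def)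
  have split: "cartan_form a d d = cartan_form a p p - 2 * cartan_form a p m + cartan_form a m m"
    by (subst (1 2) d, simp only: cartan_form_linear_left cartan_form_linear_right,
        simp add: cartan_form_sym[of a m p])
  have "cartan_form a p m \<le> 0"
    unfolding cartan_form_def
  proof (intro sum_nonpos)
    fix x y
    show "cartan a x y * p x * m y \<le> 0"
    proof (cases "x = y")
      case False
      then have "cartan a x y \<le> 0" by (simp add: cartan_def)
      moreover have "p x * m y \<ge> 0" by (simp add: p_def m_def)
      ultimately show ?thesis by (metis mult.assoc mult_nonpos_nonneg)
    qed (simp add: p_def m_def)
  qed
  moreover have "p j \<noteq> 0" and "m i \<noteq> 0"
    using i j by (simp_all add: p_def m_def)
  then have "p \<noteq> (\<lambda>_. 0)" and "m \<noteq> (\<lambda>_. 0)" by auto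
  ultimately have "cartan_form a d d \<ge> 4"
    using split cartan_form_ge_2[of p] cartan_form_ge_2[of m] by linarith
  then show False using root_norm[OF assms] by simp
qed

lemma nonneg_root_if_height_eq:
  assumes "\<gamma> \<in> roots a" and "\<beta> \<in> roots a" and "nonneg \<gamma>" and "height \<gamma> = height \<beta>"
  shows "nonneg \<beta>"
proof -
  have "height \<beta> > 0"
    using height_pos[OF assms(3) root_nonzero[OF assms(1)]] assms(4) by simp
  then show ?thesis
    using root_sign[OF assms(2)] height_nonneg[of "- \<beta>"] by (auto simp: height_uminus)
qed

end

section \<open>Quiver automorphisms and their orbits\<close>

lemma act_eq_comp: "act g d = d \<circ> inv g"
  by (simp add: act_def comp_def)

lemma act_uminus: "act g (- d) = - act g d"
  by (simp add: act_def fun_eq_iff)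

lemma simple_root_comp: "bij h \<Longrightarrow> simple_root k \<circ> h = simple_root (inv h k)"
  by (auto simp: simple_root_def fun_eq_iff bij_inv_eq_iff)

locale dynkin_aut = dynkin a for a :: "'v::finite \<Rightarrow> 'v \<Rightarrow> nat" +
  fixes G :: "('v \<Rightarrow> 'v) set"
  assumes aut_group: "aut_group a G"
begin

lemma G_bij: "g \<in> G \<Longrightarrow> bij g"
  using aut_group by (simp add: aut_group_def quiver_aut_def)

lemma id_in_G: "id \<in> G"
  using aut_group by (simp add: aut_group_def)

lemma comp_in_G: "g \<in> G \<Longrightarrow> h \<in> G \<Longrightarrow> g \<circ> h \<in> G"
  using aut_group by (simp add: aut_group_def)

lemma inv_in_G: "g \<in> G \<Longrightarrow> inv g \<in> G"
  using aut_group by (simp add: aut_group_def)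

lemma inv_G_apply [simp]: "g \<in> G \<Longrightarrow> inv g (g i) = i"
  using G_bij by (simp add: bij_is_inj)

lemma G_inv_apply [simp]: "g \<in> G \<Longrightarrow> g (inv g i) = i"
  using G_bij by (simp add: bij_is_surj surj_f_inv_f)

text \<open>Automorphisms only preserve the differences b_ij, but there is at most one arrow between
  two vertices, so they preserve the arrow counts themselves.\<close>
lemma arrows_G: "g \<in> G \<Longrightarrow> a (g i) (g j) = a i j"
proof -
  have "a i j = nat (bmat a i j)" for i j
    using arrows_le_1[of i j] by (auto simp: bmat_def)
  then show "g \<in> G \<Longrightarrow> a (g i) (g j) = a i j"
    using aut_group by (simp add: aut_group_def quiver_aut_def)
qed

lemma cartan_G: "g \<in> G \<Longrightarrow> cartan a (g i) (g j) = cartan a i j"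
  using G_bij[of g] by (auto simp: cartan_def arrows_G bij_is_inj inj_eq)

lemma cartan_form_comp_G:
  assumes g: "g \<in> G"
  shows "cartan_form a (x \<circ> g) (y \<circ> g) = cartan_form a x y"
proof -
  have reindex: "(\<Sum>i\<in>UNIV. F (g i)) = (\<Sum>i\<in>UNIV. F i)" for F :: "'v \<Rightarrow> int"
    using sum.reindex_bij_betw[OF G_bij[OF g]] .
  have "cartan_form a (x \<circ> g) (y \<circ> g)
      = (\<Sum>i\<in>UNIV. \<Sum>j\<in>UNIV. cartan a (g i) (g j) * x (g i) * y (g j))"
    by (simp add: cartan_form_def cartan_G g)
  also have "\<dots> = (\<Sum>i\<in>UNIV. \<Sum>j\<in>UNIV. cartan a i (g j) * x i * y (g j))"
    by (rule reindex)
  also have "\<dots> = cartan_form a x y"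
    unfolding cartan_form_def by (rule sum.cong[OF HOL.refl], rule reindex)
  finally show ?thesis .
qed

lemma cartan_form_comp_G_simple:
  assumes "g \<in> G"
  shows "cartan_form a (d \<circ> g) (simple_root k) = cartan_form a d (simple_root (g k))"
  using cartan_form_comp_G[OF assms, of d "simple_root (g k)"]
  by (simp add: simple_root_comp G_bij assms)

lemma act_simple_root: "g \<in> G \<Longrightarrow> act g (simple_root j) = simple_root (g j)"
  by (simp add: act_eq_comp simple_root_comp G_bij inv_in_G inv_inv_eq)

lemma orbit_self: "i \<in> orbit G i"
  unfolding orbit_def using id_in_G by (rule rev_image_eqI) simp

lemma orbit_apply: "g \<in> G \<Longrightarrow> g i \<in> orbit G i"
  unfolding orbit_def by auto

lemma orbit_eq: "j \<in> orbit G i \<Longrightarrow> orbit G j = orbit G i"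
proof -
  assume "j \<in> orbit G i"
  then obtain g where g: "g \<in> G" "j = g i" unfolding orbit_def by auto
  show ?thesis
  proof
    show "orbit G j \<subseteq> orbit G i"
      unfolding orbit_def using g comp_in_G by (auto intro!: image_eqI[where x="_ \<circ> g"])
    show "orbit G i \<subseteq> orbit G j"
      unfolding orbit_def using g comp_in_G inv_in_G
      by (auto intro!: image_eqI[where x="_ \<circ> inv g"])
  qed
qed

lemma mem_orbit_iff: "j \<in> orbit G i \<longleftrightarrow> orbit G j = orbit G i"
  using orbit_eq orbit_self by blast

lemma orbit_G_apply: "g \<in> G \<Longrightarrow> orbit G (g i) = orbit G i"
  by (rule orbit_eq[OF orbit_apply])

lemma image_orbit:
  assumes "g \<in> G"
  shows "g ` orbit G r = orbit G r"
proof
  show "g ` orbit G r \<subseteq> orbit G r"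
    using assms by (auto simp: mem_orbit_iff orbit_G_apply)
  show "orbit G r \<subseteq> g ` orbit G r"
  proof
    fix k assume "k \<in> orbit G r"
    then have "inv g k \<in> orbit G r"
      using orbit_G_apply[OF inv_in_G[OF assms]] by (simp add: mem_orbit_iff)
    then show "k \<in> g ` orbit G r"
      using G_inv_apply[OF assms] by (metis image_eqI)
  qed
qed

text \<open>Otherwise the indicator vector of the \<langle>g\<rangle>-orbit C of i would have norm \<le> 0: every
  k \<in> C has an arrow to g k \<in> C.\<close>
lemma no_arrow_within_orbit:
  assumes "j \<in> orbit G i"
  shows "a i j = 0"
proof (rule ccontr)
  assume arrow: "a i j \<noteq> 0"
  obtain g where g: "g \<in> G" "j = g i" using assms unfolding orbit_def by auto
  define C where "C = range (\<lambda>m. (g ^^ m) i)"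
  define c :: "'v \<Rightarrow> int" where "c k = (if k \<in> C then 1 else 0)" for k
  have "a ((g ^^ m) i) (g ((g ^^ m) i)) = a i j" for m
    using g by (induction m) (simp_all add: arrows_G)
  then have arrow_C: "1 \<le> a k (g k)" if "k \<in> C" for k
    using that arrow by (auto simp: C_def)
  have g_C: "g k \<in> C" if "k \<in> C" for k
    using that unfolding C_def by (auto intro: range_eqI[where x="Suc _"])
  have "i \<in> C" unfolding C_def by (rule range_eqI[where x=0]) simp
  then have "c \<noteq> (\<lambda>_. 0)" by (auto simp: c_def fun_eq_iff)
  have "(\<Sum>k\<in>C. 1) \<le> (\<Sum>k\<in>C. \<Sum>l\<in>C. int (a k l))"
  proof (rule sum_mono)
    fix k assume "k \<in> C"
    then have "int (a k (g k)) \<le> (\<Sum>l\<in>C. int (a k l))"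
      by (intro member_le_sum) (auto simp: g_C)
    then show "1 \<le> (\<Sum>l\<in>C. int (a k l))" using arrow_C[OF \<open>k \<in> C\<close>] by linarith
  qed
  moreover have "(\<Sum>k\<in>UNIV. c k * c k) = (\<Sum>k\<in>UNIV. if k \<in> C then 1 else 0)"
    by (rule sum.cong) (auto simp: c_def)
  then have "(\<Sum>k\<in>UNIV. c k * c k) = (\<Sum>k\<in>C. 1)"
    by (simp flip: sum.inter_restrict)
  moreover have "(\<Sum>k\<in>UNIV. \<Sum>l\<in>UNIV. int (a k l) * c k * c l)
      = (\<Sum>k\<in>UNIV. if k \<in> C then \<Sum>l\<in>UNIV. if l \<in> C then int (a k l) else 0 else 0)"
    by (auto intro!: sum.cong simp: c_def)
  then have "(\<Sum>k\<in>UNIV. \<Sum>l\<in>UNIV. int (a k l) * c k * c l) = (\<Sum>k\<in>C. \<Sum>l\<in>C. int (a k l))"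
    by (simp flip: sum.inter_restrict)
  ultimately have "cartan_form a c c \<le> 0"
    using cartan_form_diag[of c] by simp
  with cartan_form_pos[OF \<open>c \<noteq> _\<close>] show False by simp
qed

lemma cartan_within_orbit:
  assumes "i \<in> orbit G r" and "j \<in> orbit G r" and "i \<noteq> j"
  shows "cartan a i j = 0"
  using assms no_arrow_within_orbit[of j i] no_arrow_within_orbit[of i j]
  by (simp add: cartan_def mem_orbit_iff)

end

section \<open>Reflections in an orbit\<close>

text \<open>If the simple roots \<alpha>_k, k \<in> S, are pairwise orthogonal, this is the product of the
  simple reflections s_k, k \<in> S.\<close>
definition set_reflection :: "('v::finite \<Rightarrow> 'v \<Rightarrow> nat) \<Rightarrow> 'v set \<Rightarrow> ('v \<Rightarrow> int) \<Rightarrow> ('v \<Rightarrow> int)" where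
  "set_reflection a S d = (\<lambda>k. if k \<in> S then d k - cartan_form a d (simple_root k) else d k)"

lemma height_set_reflection:
  "height (set_reflection a S d) = height d - (\<Sum>k\<in>S. cartan_form a d (simple_root k))"
proof -
  have "height (set_reflection a S d)
      = (\<Sum>i\<in>UNIV. d i - (if i \<in> S then cartan_form a d (simple_root i) else 0))"
    unfolding height_def set_reflection_def by (rule sum.cong) auto
  then show ?thesis
    by (simp add: height_def sum_subtractf flip: sum.inter_restrict)
qed

context dynkin_aut
begin

lemma set_reflection_root:
  assumes "S \<subseteq> orbit G r" and "d \<in> roots a"
  shows "set_reflection a S d \<in> roots a"
  using finite[of S] assms(1)
proof (induction S rule: finite_induct)
  case empty
  then show ?case using assms(2) by (simp add: set_reflection_def)
next
  case (insert j S)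
  have "cartan_form a (set_reflection a S d) (simple_root j) = cartan_form a d (simple_root j)"
    unfolding cartan_form_simple_root
  proof (rule sum.cong[OF HOL.refl])
    fix i
    have "cartan a i j = 0" if "i \<in> S"
      using that insert by (intro cartan_within_orbit[of i r j]) auto
    then show "cartan a i j * set_reflection a S d i = cartan a i j * d i"
      by (auto simp: set_reflection_def)
  qed
  then have "set_reflection a (insert j S) d = reflection a j (set_reflection a S d)"
    using insert.hyps by (auto simp: reflection_eq set_reflection_def simple_root_def)
  then show ?case using insert roots.refl by simp
qed

lemma set_reflection_orbit_root: "d \<in> roots a \<Longrightarrow> set_reflection a (orbit G r) d \<in> roots a"
  by (rule set_reflection_root[OF subset_refl])

lemma cartan_form_set_reflection_orbit:
  assumes "j \<in> orbit G r"
  shows "cartan_form a (set_reflection a (orbit G r) d) (simple_root j)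
           = - cartan_form a d (simple_root j)"
proof -
  have "cartan a i j * set_reflection a (orbit G r) d i
      = cartan a i j * d i - (if i = j then 2 * cartan_form a d (simple_root j) else 0)" for i
    using assms cartan_within_orbit[of i r j]
    by (cases "i = j") (auto simp: set_reflection_def cartan_diag algebra_simps)
  then show ?thesis
    by (simp add: cartan_form_simple_root sum_subtractf)
qed

lemma set_reflection_orbit_involution:
  "set_reflection a (orbit G r) (set_reflection a (orbit G r) d) = d"
  unfolding set_reflection_def[of a "orbit G r" "set_reflection a (orbit G r) d"]
  by (simp add: fun_eq_iff cartan_form_set_reflection_orbit) (simp add: set_reflection_def)

lemma set_reflection_orbit_comp:
  assumes "h \<in> G"
  shows "set_reflection a (orbit G r) (d \<circ> h) = set_reflection a (orbit G r) d \<circ> h"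
proof -
  have "h k \<in> orbit G r \<longleftrightarrow> k \<in> orbit G r" for k
    using assms by (simp add: mem_orbit_iff orbit_G_apply)
  then show ?thesis
    using assms by (auto simp: fun_eq_iff set_reflection_def cartan_form_comp_G_simple)
qed

lemma act_set_reflection_orbit:
  "g \<in> G \<Longrightarrow> act g (set_reflection a (orbit G r) d) = set_reflection a (orbit G r) (act g d)"
  by (simp add: act_eq_comp set_reflection_orbit_comp inv_in_G)

lemma orbit_proj_set_reflection_orbit:
  "orbit_proj (set_reflection a (orbit G r) d) (orbit G i) = orbit_proj d (orbit G i)
     - (if orbit G i = orbit G r
        then orbit_proj (\<lambda>k. cartan_form a d (simple_root k)) (orbit G r) else 0)"
proof (cases "orbit G i = orbit G r")
  case False
  then have "orbit G i \<inter> orbit G r = {}"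
    by (metis disjoint_iff mem_orbit_iff)
  then have "orbit_proj (set_reflection a (orbit G r) d) (orbit G i) = orbit_proj d (orbit G i)"
    unfolding orbit_proj_def set_reflection_def by (intro sum.cong) auto
  then show ?thesis using False by simp
next
  case True
  then show ?thesis by (simp add: orbit_proj_def set_reflection_def sum_subtractf)
qed

section \<open>Roots with the same projection\<close>

lemma sum_over_orbits: "(\<Sum>i\<in>UNIV. f i) = (\<Sum>X\<in>orbit G ` UNIV. \<Sum>i\<in>X. f i)"
proof -
  have "\<Union>(orbit G ` UNIV) = UNIV" using orbit_self by blast
  moreover have "X \<inter> Y = {}" if "X \<in> orbit G ` UNIV" "Y \<in> orbit G ` UNIV" "X \<noteq> Y" for X Y
    using that by (auto simp: mem_orbit_iff)
  ultimately show ?thesis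
    using sum.Union_disjoint[of "orbit G ` UNIV" f] by (simp add: pairwise_def disjnt_def)
qed

lemma sum_orbit_invariant_weight:
  assumes "\<And>h i. h \<in> G \<Longrightarrow> w (h i) = w i"
  shows "(\<Sum>i\<in>orbit G x. w i * d i) = w x * orbit_proj d (orbit G x)"
proof -
  have "(\<Sum>i\<in>orbit G x. w i * d i) = (\<Sum>i\<in>orbit G x. w x * d i)"
    using assms unfolding orbit_def by (intro sum.cong) auto
  then show ?thesis by (simp add: orbit_proj_def sum_distrib_left)
qed

lemma weighted_sum_eq_if_proj_eq:
  assumes proj: "\<forall>X\<in>orbit G ` UNIV. orbit_proj \<gamma> X = orbit_proj \<beta> X"
    and w: "\<And>h i. h \<in> G \<Longrightarrow> w (h i) = w i"
  shows "(\<Sum>i\<in>UNIV. w i * \<gamma> i) = (\<Sum>i\<in>UNIV. w i * \<beta> i)"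
  unfolding sum_over_orbits
  by (rule sum.cong) (auto simp: sum_orbit_invariant_weight[OF w] proj)

lemma height_eq_if_proj_eq:
  "\<forall>X\<in>orbit G ` UNIV. orbit_proj \<gamma> X = orbit_proj \<beta> X \<Longrightarrow> height \<gamma> = height \<beta>"
  using weighted_sum_eq_if_proj_eq[of \<gamma> \<beta> "\<lambda>_. 1"] by (simp add: height_def)

lemma orbit_pairing_eq_if_proj_eq:
  assumes "\<forall>X\<in>orbit G ` UNIV. orbit_proj \<gamma> X = orbit_proj \<beta> X"
  shows "orbit_proj (\<lambda>k. cartan_form a \<gamma> (simple_root k)) (orbit G r)
       = orbit_proj (\<lambda>k. cartan_form a \<beta> (simple_root k)) (orbit G r)"
proof -
  have pairing: "orbit_proj (\<lambda>k. cartan_form a d (simple_root k)) (orbit G r)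
      = (\<Sum>i\<in>UNIV. (\<Sum>k\<in>orbit G r. cartan a i k) * d i)" for d
    unfolding orbit_proj_def cartan_form_simple_root
    by (subst sum.swap) (simp add: sum_distrib_right)
  have "(\<Sum>k\<in>orbit G r. cartan a (h i) k) = (\<Sum>k\<in>orbit G r. cartan a i k)" if "h \<in> G" for h i
  proof -
    have "bij_betw h (orbit G r) (orbit G r)"
      using image_orbit[OF that] bij_is_inj[OF G_bij[OF that]]
      by (metis bij_betw_def inj_on_subset subset_UNIV)
    then have "(\<Sum>k\<in>orbit G r. cartan a (h i) (h k)) = (\<Sum>k\<in>orbit G r. cartan a (h i) k)"
      by (rule sum.reindex_bij_betw)
    then show ?thesis by (simp add: cartan_G that)
  qed
  then show ?thesis
    unfolding pairing by (rule weighted_sum_eq_if_proj_eq[OF assms])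
qed

lemma support_in_orbit_if_proj_eq:
  assumes proj: "\<forall>X\<in>orbit G ` UNIV. orbit_proj \<gamma> X = orbit_proj \<beta> X"
    and "nonneg \<beta>" and supp: "\<forall>k. k \<notin> orbit G r \<longrightarrow> \<gamma> k = 0"
    and "k \<notin> orbit G r"
  shows "\<beta> k = 0"
proof -
  have "orbit G k \<inter> orbit G r = {}"
    using \<open>k \<notin> orbit G r\<close> by (auto simp: mem_orbit_iff)
  then have "orbit_proj \<gamma> (orbit G k) = 0"
    using supp by (auto simp: orbit_proj_def intro: sum.neutral)
  then have "orbit_proj \<beta> (orbit G k) = 0"
    using proj by simp
  then show ?thesis
    using \<open>nonneg \<beta>\<close> orbit_self[of k]
    by (simp add: orbit_proj_def nonneg_def sum_nonneg_eq_0_iff)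
qed

text \<open>Average \<gamma> over G: the vector S = (\<Sum>g\<in>G. \<gamma> \<circ> g) is G-invariant and nonzero, so
  0 < (S, S) = |G| (\<gamma>, S) = |G| \<Sum> S(O) (\<Sum>k\<in>O. (\<gamma>, \<alpha>_k)), summed over the orbits O.\<close>
lemma exists_orbit_pairing_pos:
  assumes "nonneg \<gamma>" and "\<gamma> \<noteq> (\<lambda>_. 0)"
  shows "\<exists>r. orbit_proj (\<lambda>k. cartan_form a \<gamma> (simple_root k)) (orbit G r) > 0"
proof (rule ccontr)
  assume "\<not> ?thesis"
  then have nonpos: "orbit_proj (\<lambda>k. cartan_form a \<gamma> (simple_root k)) (orbit G r) \<le> 0" for r
    by (simp add: not_less)
  define S where "S = (\<lambda>i. \<Sum>g\<in>G. (\<gamma> \<circ> g) i)"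
  have S_G: "S (h i) = S i" if "h \<in> G" for h i
    unfolding S_def o_apply
    by (rule sum.reindex_bij_witness[where i="\<lambda>g. g \<circ> inv h" and j="\<lambda>g. g \<circ> h"])
      (auto simp: that comp_in_G inv_in_G fun_eq_iff)
  have "(\<gamma> \<circ> id) i \<le> S i" for i
    unfolding S_def using assms(1) by (intro member_le_sum id_in_G) (auto simp: nonneg_def)
  then have "\<gamma> i \<le> S i" for i by simp
  then have "S \<noteq> (\<lambda>_. 0)"
    using assms by (auto simp: nonneg_def fun_eq_iff intro: antisym)
  have "cartan_form a S S = (\<Sum>g\<in>G. cartan_form a (\<gamma> \<circ> g) (S \<circ> g))"
    using S_G by (simp add: S_def cartan_form_sum_left comp_def cong: sum.cong)
  also have "\<dots> = of_nat (card G) * cartan_form a \<gamma> S"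
    by (simp add: cartan_form_comp_G)
  finally have SS: "cartan_form a S S = of_nat (card G) * cartan_form a \<gamma> S" .
  have "cartan_form a \<gamma> S = (\<Sum>X\<in>orbit G ` UNIV. \<Sum>j\<in>X. S j * cartan_form a \<gamma> (simple_root j))"
    unfolding sum_over_orbits[symmetric] by (rule cartan_form_expand_right)
  also have "\<dots> \<le> 0"
  proof (rule sum_nonpos)
    fix X assume "X \<in> orbit G ` UNIV"
    then obtain x where "X = orbit G x" by auto
    moreover have "S x \<ge> 0"
      using assms(1) by (simp add: S_def nonneg_def sum_nonneg)
    ultimately show "(\<Sum>j\<in>X. S j * cartan_form a \<gamma> (simple_root j)) \<le> 0"
      using nonpos[of x] by (simp add: sum_orbit_invariant_weight S_G mult_nonneg_nonpos)
  qed
  finally have "cartan_form a S S \<le> 0"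
    using SS by (simp add: mult_nonneg_nonpos)
  with cartan_form_pos[OF \<open>S \<noteq> _\<close>] show False by simp
qed

text \<open>The simple roots of one orbit are pairwise orthogonal, so 2 = (\<gamma>, \<gamma>) = 2 \<Sum> \<gamma>_k^2.\<close>
lemma root_supported_in_orbit:
  assumes root: "\<gamma> \<in> roots a" and "nonneg \<gamma>" and supp: "\<forall>k. k \<notin> orbit G r \<longrightarrow> \<gamma> k = 0"
  shows "\<exists>j\<in>orbit G r. \<gamma> = simple_root j"
proof -
  have "cartan a i j * \<gamma> i * \<gamma> j = (if i = j then 2 * (\<gamma> i * \<gamma> i) else 0)" for i j
  proof (cases "i = j")
    case False
    then have "cartan a i j = 0 \<or> \<gamma> i = 0 \<or> \<gamma> j = 0"
      using supp cartan_within_orbit[of i r j] by blast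
    with False show ?thesis by auto
  qed (simp add: cartan_diag)
  then have "cartan_form a \<gamma> \<gamma> = 2 * (\<Sum>i\<in>UNIV. \<gamma> i * \<gamma> i)"
    by (simp add: cartan_form_def sum_distrib_left)
  then have squares: "(\<Sum>k\<in>UNIV. \<gamma> k * \<gamma> k) = 1"
    using root_norm[OF root] by simp
  obtain j where "\<gamma> j \<noteq> 0" using root_nonzero[OF root] by auto
  then have "\<gamma> j > 0" and "j \<in> orbit G r"
    using \<open>nonneg \<gamma>\<close> supp by (auto simp: nonneg_def order_less_le)
  then have "\<gamma> j \<ge> 1" by simp
  have "(\<Sum>k\<in>UNIV. \<gamma> k * \<gamma> k) = \<gamma> j * \<gamma> j + (\<Sum>k\<in>UNIV - {j}. \<gamma> k * \<gamma> k)"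
    by (simp add: sum.remove)
  moreover have "(\<Sum>k\<in>UNIV - {j}. \<gamma> k * \<gamma> k) \<ge> 0" and "\<gamma> j \<le> \<gamma> j * \<gamma> j"
    using \<open>\<gamma> j \<ge> 1\<close> by (simp_all add: sum_nonneg)
  ultimately have "\<gamma> j = 1" and "(\<Sum>k\<in>UNIV - {j}. \<gamma> k * \<gamma> k) = 0"
    using squares \<open>\<gamma> j \<ge> 1\<close> by linarith+
  then have "\<gamma> = simple_root j"
    by (auto simp: simple_root_def fun_eq_iff sum_nonneg_eq_0_iff)
  with \<open>j \<in> orbit G r\<close> show ?thesis by blast
qed

lemma simple_roots_conjugate:
  assumes "j \<in> orbit G r" and "k \<in> orbit G r"
  shows "\<exists>g\<in>G. simple_root j = act g (simple_root k)"
proof -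
  obtain g h where "g \<in> G" "j = g r" "h \<in> G" "k = h r"
    using assms unfolding orbit_def by auto
  then have "g \<circ> inv h \<in> G" and "(g \<circ> inv h) k = j"
    by (simp_all add: comp_in_G inv_in_G)
  then show ?thesis
    using act_simple_root by metis
qed

lemma nonneg_set_reflection_orbit:
  assumes "d \<in> roots a" and "nonneg d" and "k \<notin> orbit G r" and "d k \<noteq> 0"
  shows "nonneg (set_reflection a (orbit G r) d)"
proof -
  have "set_reflection a (orbit G r) d k > 0"
    using assms(2-4) by (simp add: set_reflection_def nonneg_def order_less_le)
  moreover have "\<not> nonneg (- set_reflection a (orbit G r) d)"
    using calculation unfolding nonneg_def by (metis neg_0_le_iff_le not_le uminus_apply)
  ultimately show ?thesis
    using root_sign[OF set_reflection_orbit_root[OF assms(1)]] by blast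
qed

text \<open>If \<gamma> is not supported in a single orbit, reflect both \<gamma> and \<beta> in an orbit O with
  (\<gamma>, \<Sum>k\<in>O. \<alpha>_k) > 0: since \<pi>(\<gamma>) = \<pi>(\<beta>), both heights drop by the same amount and \<pi>
  stays equal.\<close>
lemma positive_roots_conjugate:
  assumes "\<gamma> \<in> roots a" and "\<beta> \<in> roots a" and "nonneg \<gamma>" and "nonneg \<beta>"
    and "\<forall>X\<in>orbit G ` UNIV. orbit_proj \<gamma> X = orbit_proj \<beta> X"
  shows "\<exists>g\<in>G. \<gamma> = act g \<beta>"
  using assms
proof (induction "nat (height \<gamma>)" arbitrary: \<gamma> \<beta> rule: less_induct)
  case less
  note proj = \<open>\<forall>X\<in>orbit G ` UNIV. orbit_proj \<gamma> X = orbit_proj \<beta> X\<close>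
  show ?case
  proof (cases "\<exists>r. \<forall>k. k \<notin> orbit G r \<longrightarrow> \<gamma> k = 0")
    case True
    then obtain r where supp: "\<forall>k. k \<notin> orbit G r \<longrightarrow> \<gamma> k = 0" by blast
    then have "\<forall>k. k \<notin> orbit G r \<longrightarrow> \<beta> k = 0"
      using support_in_orbit_if_proj_eq[OF proj \<open>nonneg \<beta>\<close>] by blast
    then show ?thesis
      using root_supported_in_orbit less.prems supp simple_roots_conjugate by metis
  next
    case False
    obtain r where pos: "orbit_proj (\<lambda>k. cartan_form a \<gamma> (simple_root k)) (orbit G r) > 0"
      using exists_orbit_pairing_pos[OF \<open>nonneg \<gamma>\<close> root_nonzero[OF \<open>\<gamma> \<in> roots a\<close>]] by blast
    let ?s = "set_reflection a (orbit G r)"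
    obtain k where "k \<notin> orbit G r" "\<gamma> k \<noteq> 0" using False by blast
    moreover have "\<forall>X\<in>orbit G ` UNIV. orbit_proj \<beta> X = orbit_proj \<gamma> X"
      using proj by simp
    then obtain l where "l \<notin> orbit G r" "\<beta> l \<noteq> 0"
      using False support_in_orbit_if_proj_eq[of \<beta> \<gamma>] \<open>nonneg \<gamma>\<close> by blast
    ultimately have "nonneg (?s \<gamma>)" and "nonneg (?s \<beta>)"
      using less.prems by (simp_all add: nonneg_set_reflection_orbit)
    moreover have "?s \<gamma> \<in> roots a" and "?s \<beta> \<in> roots a"
      using less.prems by (simp_all add: set_reflection_orbit_root)
    moreover have "\<forall>X\<in>orbit G ` UNIV. orbit_proj (?s \<gamma>) X = orbit_proj (?s \<beta>) X"
      using proj orbit_pairing_eq_if_proj_eq[OF proj]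
      by (auto simp: orbit_proj_set_reflection_orbit)
    moreover have "nat (height (?s \<gamma>)) < nat (height \<gamma>)"
      using pos height_nonneg[OF \<open>nonneg (?s \<gamma>)\<close>]
      by (simp add: height_set_reflection orbit_proj_def)
    ultimately obtain g where "g \<in> G" and "?s \<gamma> = act g (?s \<beta>)"
      using less.hyps by blast
    then have "?s \<gamma> = ?s (act g \<beta>)"
      by (simp add: act_set_reflection_orbit)
    then have "\<gamma> = act g \<beta>"
      by (metis set_reflection_orbit_involution)
    with \<open>g \<in> G\<close> show ?thesis by blast
  qed
qed

end

theorem mainTheorem18:
  fixes a :: "'v::finite \<Rightarrow> 'v \<Rightarrow> nat" and G :: "('v \<Rightarrow> 'v) set"
    and \<gamma> \<beta> :: "'v \<Rightarrow> int"
  assumes "dynkin_quiver a"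
    and "aut_group a G"
    and "\<gamma> \<in> roots a" and "\<beta> \<in> roots a"
    and "\<forall>X \<in> orbit G ` UNIV. orbit_proj \<gamma> X = orbit_proj \<beta> X"
  shows "\<exists>g\<in>G. \<gamma> = act g \<beta>"
proof -
  interpret dynkin_aut a G using assms(1,2) by unfold_locales
  have height: "height \<gamma> = height \<beta>"
    using assms(5) by (rule height_eq_if_proj_eq)
  from root_sign[OF assms(3)] show ?thesis
  proof
    assume "nonneg \<gamma>"
    then have "nonneg \<beta>"
      using nonneg_root_if_height_eq assms(3,4) height by blast
    then show ?thesis
      using positive_roots_conjugate assms(3-5) \<open>nonneg \<gamma>\<close> by blast
  next
    assume "nonneg (- \<gamma>)"
    have roots: "- \<gamma> \<in> roots a" "- \<beta> \<in> roots a"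
      using assms(3,4) by (simp_all add: root_uminus)
    moreover have "nonneg (- \<beta>)"
      using nonneg_root_if_height_eq[OF roots \<open>nonneg (- \<gamma>)\<close>] height by (simp add: height_uminus)
    moreover have "\<forall>X\<in>orbit G ` UNIV. orbit_proj (- \<gamma>) X = orbit_proj (- \<beta>) X"
      using assms(5) by (simp add: orbit_proj_def sum_negf)
    ultimately obtain g where "g \<in> G" and "- \<gamma> = act g (- \<beta>)"
      using positive_roots_conjugate \<open>nonneg (- \<gamma>)\<close> by blast
    then have "\<gamma> = act g \<beta>"
      by (simp add: act_uminus fun_eq_iff)
    with \<open>g \<in> G\<close> show ?thesis by blast
  qed
qed

end
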